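(* Let $k$ be a positive integer and let $G$ be a $3$-graph with $\lambda(G)>\lambda(K_{k+1}^3)$, and let $\vec x$ be an optimal weight vector of $G$. Then for every $v\in V(G)$, its weight satisfies $x_v<1-\frac{\sqrt{k(k-1)}}{k+1}$.
   Context: For a $3$-graph $G$ on vertex set $[n]$ and $\vec x\in\Delta=\{\vec x\in[0,1]^n:\sum_i x_i=1\}$, put $\lambda(G,\vec x)=\sum_{e\in E(G)}\prod_{i\in e}x_i$ and $\lambda(G)=\max_{\vec x\in\Delta}\lambda(G,\vec x)$ (the Lagrangian). A vector $\vec x\in\Delta$ with $\lambda(G,\vec x)=\lambda(G)$ is an optimal weight vector, and $x_v$ is the weight of vertex $v$. $K_m^3$ is the complete $3$-graph on $m$ vertices. *)

theory Defs
  imports Complex_Main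
begin

definition is_3graph :: "nat \<Rightarrow> nat set set \<Rightarrow> bool" where
  "is_3graph n E \<longleftrightarrow> (\<forall>e\<in>E. e \<subseteq> {0..<n} \<and> card e = 3)"

definition simplex :: "nat \<Rightarrow> (nat \<Rightarrow> real) set" where
  "simplex n = {x. (\<forall>i<n. 0 \<le> x i \<and> x i \<le> 1) \<and> (\<Sum>i<n. x i) = 1}"

definition lagr_at :: "nat set set \<Rightarrow> (nat \<Rightarrow> real) \<Rightarrow> real" where
  "lagr_at E x = (\<Sum>e\<in>E. \<Prod>i\<in>e. x i)"

text \<open>Lagrangian: maximum (supremum, attained by compactness) over the simplex.\<close>
definition lagrangian :: "nat \<Rightarrow> nat set set \<Rightarrow> real" where
  "lagrangian n E = (SUP x\<in>simplex n. lagr_at E x)"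

definition optimal_weight :: "nat \<Rightarrow> nat set set \<Rightarrow> (nat \<Rightarrow> real) \<Rightarrow> bool" where
  "optimal_weight n E x \<longleftrightarrow> x \<in> simplex n \<and> lagr_at E x = lagrangian n E"

definition complete3 :: "nat \<Rightarrow> nat set set" where
  "complete3 m = {e. e \<subseteq> {0..<m} \<and> card e = 3}"

end

theory Submission
  imports Defs
begin

text \<open>Let \<open>a = x\<^sub>v > 0\<close>. Shifting mass from \<open>v\<close> to the other vertices, scaling their
  weights by \<open>t \<ge> 1\<close>, cannot increase the Lagrangian; differentiating at \<open>t = 1\<close> gives
  \<open>3 \<lambda>(G) \<le> L\<close>, where \<open>L\<close> is the Lagrangian of the link of \<open>v\<close> at \<open>x\<close>. The link is a
  2-graph on the other vertices, whose weights sum to \<open>1 - a\<close>, so \<open>2 L \<le> (1 - a)\<^sup>2\<close>.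
  Hence \<open>(1 - a)\<^sup>2 \<ge> 6 \<lambda>(G) > 6 \<lambda>(K\<^sub>k\<^sub>+\<^sub>1\<^sup>3) \<ge> k (k - 1) / (k + 1)\<^sup>2\<close>, the last
  bound coming from the uniform weighting of \<open>K\<^sub>k\<^sub>+\<^sub>1\<^sup>3\<close>.\<close>

lemma finite_is_3graph: "is_3graph n E \<Longrightarrow> finite E"
  unfolding is_3graph_def by (rule finite_subset[of _ "Pow {0..<n}"]) auto

lemma lagr_at_le_lagrangian:
  assumes G: "is_3graph n E" and z: "z \<in> simplex n"
  shows "lagr_at E z \<le> lagrangian n E"
proof -
  have "lagr_at E w \<le> real (card E)" if w: "w \<in> simplex n" for w
  proof -
    have "lagr_at E w \<le> (\<Sum>e\<in>E. 1)"
      unfolding lagr_at_def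
    proof (rule sum_mono)
      fix e assume "e \<in> E"
      then have "e \<subseteq> {0..<n}" using G by (auto simp: is_3graph_def)
      then show "(\<Prod>i\<in>e. w i) \<le> 1"
        using w by (intro prod_le_1) (auto simp: simplex_def)
    qed
    then show ?thesis by simp
  qed
  then have "bdd_above (lagr_at E ` simplex n)"
    by (intro bdd_aboveI[of _ "real (card E)"]) auto
  with z show ?thesis
    unfolding lagrangian_def by (rule cSUP_upper)
qed

lemma lagr_at_cong:
  assumes "is_3graph n E" and "\<And>i. i < n \<Longrightarrow> x i = y i"
  shows "lagr_at E x = lagr_at E y"
  unfolding lagr_at_def using assms
  by (intro sum.cong refl prod.cong) (auto simp: is_3graph_def subset_eq)

lemma lagr_at_scale:
  assumes "\<forall>e\<in>F. card e = r"
  shows "lagr_at F (\<lambda>i. t * x i) = t ^ r * lagr_at F x"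
  unfolding lagr_at_def sum_distrib_left using assms
  by (intro sum.cong) (simp_all add: prod.distrib)

lemma lagr_at_upd_irrelevant:
  assumes "\<forall>e\<in>F. v \<notin> e"
  shows "lagr_at F (x(v := c)) = lagr_at F x"
  unfolding lagr_at_def using assms by (intro sum.cong refl prod.cong) auto

definition link :: "nat set set \<Rightarrow> nat \<Rightarrow> nat set set" where
  "link E v = (\<lambda>e. e - {v}) ` {e \<in> E. v \<in> e}"

lemma link_edge:
  assumes "is_3graph n E" and "p \<in> link E v"
  shows "p \<subseteq> {..<n} - {v}" and "card p = 2"
proof -
  obtain e where e: "e \<in> E" "v \<in> e" "p = e - {v}"
    using assms(2) by (auto simp: link_def)
  with assms(1) have "e \<subseteq> {..<n}" "card e = 3"
    by (auto simp: is_3graph_def subset_eq)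
  with e show "p \<subseteq> {..<n} - {v}" "card p = 2"
    by (auto simp: finite_subset subset_eq)
qed

lemma lagr_at_split_vertex:
  assumes "finite E" and "\<forall>e\<in>E. finite e"
  shows "lagr_at E x = x v * lagr_at (link E v) x + lagr_at {e \<in> E. v \<notin> e} x"
proof -
  have "inj_on (\<lambda>e. e - {v}) {e \<in> E. v \<in> e}"
    by (rule inj_onI) blast
  then have "lagr_at (link E v) x = (\<Sum>e\<in>{e \<in> E. v \<in> e}. \<Prod>i\<in>e - {v}. x i)"
    unfolding lagr_at_def link_def by (simp add: sum.reindex)
  moreover have "(\<Sum>e\<in>{e \<in> E. v \<in> e}. \<Prod>i\<in>e. x i)
      = (\<Sum>e\<in>{e \<in> E. v \<in> e}. x v * (\<Prod>i\<in>e - {v}. x i))"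
    using assms(2) by (intro sum.cong refl) (simp add: prod.remove)
  moreover have "lagr_at E x = (\<Sum>e\<in>{e \<in> E. v \<in> e}. \<Prod>i\<in>e. x i) + lagr_at {e \<in> E. v \<notin> e} x"
    unfolding lagr_at_def using assms(1)
    by (subst sum.union_disjoint[symmetric]) (auto intro: sum.cong)
  ultimately show ?thesis
    by (simp add: sum_distrib_left)
qed

lemma lagr_at_rescaled:
  assumes G: "is_3graph n E"
  shows "lagr_at E ((\<lambda>i. t * x i)(v := c))
    = c * t ^ 2 * lagr_at (link E v) x + t ^ 3 * lagr_at {e \<in> E. v \<notin> e} x"
proof -
  let ?y = "(\<lambda>i. t * x i)(v := c)"
  have "\<forall>e\<in>E. finite e"
    using G by (auto simp: is_3graph_def finite_subset)
  then have "lagr_at E ?y = c * lagr_at (link E v) ?y + lagr_at {e \<in> E. v \<notin> e} ?y"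
    using lagr_at_split_vertex[OF finite_is_3graph[OF G], of ?y v] by simp
  moreover have "lagr_at (link E v) ?y = t ^ 2 * lagr_at (link E v) x"
  proof -
    have "lagr_at (link E v) ?y = lagr_at (link E v) (\<lambda>i. t * x i)"
      using link_edge(1)[OF G] by (intro lagr_at_upd_irrelevant) blast
    also have "\<dots> = t ^ 2 * lagr_at (link E v) x"
      using link_edge(2)[OF G] by (intro lagr_at_scale) blast
    finally show ?thesis .
  qed
  moreover have "lagr_at {e \<in> E. v \<notin> e} ?y = t ^ 3 * lagr_at {e \<in> E. v \<notin> e} x"
  proof -
    have "lagr_at {e \<in> E. v \<notin> e} ?y = lagr_at {e \<in> E. v \<notin> e} (\<lambda>i. t * x i)"
      by (intro lagr_at_upd_irrelevant) blast
    also have "\<dots> = t ^ 3 * lagr_at {e \<in> E. v \<notin> e} x"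
      using G by (intro lagr_at_scale) (auto simp: is_3graph_def)
    finally show ?thesis .
  qed
  ultimately show ?thesis
    by simp
qed

lemma simplex_sum_remove:
  assumes "x \<in> simplex n" and "v < n"
  shows "(\<Sum>i\<in>{..<n} - {v}. x i) = 1 - x v"
  using assms sum.remove[of "{..<n}" v x] by (simp add: simplex_def)

lemma rescaled_in_simplex:
  assumes x: "x \<in> simplex n" and v: "v < n" and t: "0 \<le> t" "t * (1 - x v) \<le> 1"
  shows "(\<lambda>i. t * x i)(v := 1 - t * (1 - x v)) \<in> simplex n" (is "?y \<in> _")
proof -
  have nonneg: "0 \<le> ?y i" if "i < n" for i
    using x t that by (auto simp: simplex_def)
  have "(\<Sum>i<n. ?y i) = ?y v + (\<Sum>i\<in>{..<n} - {v}. t * x i)"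
    using v sum.remove[of "{..<n}" v ?y] by simp
  also have "\<dots> = 1"
    using simplex_sum_remove[OF x v] by (simp add: sum_distrib_left[symmetric])
  finally have sum: "(\<Sum>i<n. ?y i) = 1" .
  have "?y i \<le> 1" if "i < n" for i
    using member_le_sum[of i "{..<n}" ?y] nonneg sum that by simp
  with nonneg sum show ?thesis
    by (simp add: simplex_def)
qed

lemma lagr_at_pairs_le_square:
  assumes S: "finite S" and nonneg: "\<forall>i\<in>S. 0 \<le> x i"
    and F: "\<forall>p\<in>F. p \<subseteq> S \<and> card p = 2"
  shows "2 * lagr_at F x \<le> (\<Sum>i\<in>S. x i) ^ 2"
proof -
  define P where "P p = {(i, j). i \<in> p \<and> j \<in> p \<and> i \<noteq> j}" for p :: "nat set"
  have pair: "\<exists>i j. p = {i, j} \<and> i \<noteq> j" if "p \<in> F" for p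
    using F that by (simp add: card_2_iff)
  have finF: "finite F"
    using F S by (blast intro: finite_subset[of F "Pow S"])
  have finP: "finite (P p)" and sumP: "(\<Sum>(i, j)\<in>P p. x i * x j) = 2 * (\<Prod>i\<in>p. x i)"
    if p: "p \<in> F" for p
  proof -
    obtain i j where "p = {i, j}" "i \<noteq> j"
      using pair[OF p] by blast
    moreover from this have "P p = {(i, j), (j, i)}"
      by (auto simp: P_def)
    ultimately show "finite (P p)" "(\<Sum>(i, j)\<in>P p. x i * x j) = 2 * (\<Prod>i\<in>p. x i)"
      by auto
  qed
  have disj: "P p \<inter> P q = {}" if "p \<in> F" "q \<in> F" "p \<noteq> q" for p q
    using pair[OF that(1)] pair[OF that(2)] that(3) by (auto simp: P_def doubleton_eq_iff)
  have "2 * lagr_at F x = (\<Sum>p\<in>F. \<Sum>(i, j)\<in>P p. x i * x j)"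
    by (simp add: lagr_at_def sum_distrib_left sumP)
  also have "\<dots> = (\<Sum>(i, j)\<in>\<Union>(P ` F). x i * x j)"
    using finF finP disj by (intro sum.UNION_disjoint[symmetric]) auto
  also have "\<dots> \<le> (\<Sum>(i, j)\<in>S \<times> S. x i * x j)"
    using S nonneg F by (intro sum_mono2) (auto simp: P_def)
  also have "\<dots> = (\<Sum>i\<in>S. x i) ^ 2"
    by (simp add: power2_eq_square sum_product sum.cartesian_product)
  finally show ?thesis .
qed

lemma three_lagrangian_le_link:
  assumes G: "is_3graph n E" and opt: "optimal_weight n E x"
    and v: "v < n" and pos: "0 < x v" and less1: "x v < 1"
  shows "3 * lagrangian n E \<le> lagr_at (link E v) x"
proof (rule ccontr)
  assume contra: "\<not> ?thesis"
  have x: "x \<in> simplex n" and lam: "lagr_at E x = lagrangian n E"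
    using opt by (auto simp: optimal_weight_def)
  define a L R where "a = x v" and "L = lagr_at (link E v) x"
    and "R = lagr_at {e \<in> E. v \<notin> e} x"
  define y where "y t = (\<lambda>i. t * x i)(v := 1 - t * (1 - a))" for t
  define f where "f t = (1 - t * (1 - a)) * t ^ 2 * L + t ^ 3 * R" for t :: real
  have f_eq: "f t = lagr_at E (y t)" for t
    using lagr_at_rescaled[OF G] by (simp add: f_def y_def L_def R_def)
  have "y 1 = x"
    by (auto simp: y_def a_def)
  then have f1: "f 1 = lagrangian n E"
    using f_eq lam by simp
  have "DERIV f 1 :> (3 * a - 1) * L + 3 * R"
    unfolding f_def by (auto intro!: derivative_eq_intros simp: algebra_simps)
  moreover have "0 < (3 * a - 1) * L + 3 * R"
    using contra f1 by (simp add: f_def L_def algebra_simps)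
  ultimately obtain d where d: "0 < d" "\<And>h. 0 < h \<Longrightarrow> h < d \<Longrightarrow> f 1 < f (1 + h)"
    using DERIV_pos_inc_right by blast
  define h where "h = min (d / 2) (a / (1 - a))"
  have h: "0 < h" "h < d" "(1 + h) * (1 - a) \<le> 1"
    using d(1) pos less1 by (auto simp: h_def a_def min_def field_simps)
  have "f (1 + h) \<le> lagrangian n E"
    unfolding f_eq y_def a_def
    using h by (intro lagr_at_le_lagrangian[OF G] rescaled_in_simplex[OF x v]) (auto simp: a_def)
  with d(2)[OF h(1,2)] f1 show False
    by simp
qed

lemma six_lagrangian_le_square:
  assumes G: "is_3graph n E" and opt: "optimal_weight n E x"
    and v: "v < n" and pos: "0 < x v"
  shows "6 * lagrangian n E \<le> (1 - x v) ^ 2"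
proof -
  have x: "x \<in> simplex n" and lam: "lagrangian n E = lagr_at E x"
    using opt by (auto simp: optimal_weight_def)
  have nonneg: "\<forall>i\<in>{..<n} - {v}. 0 \<le> x i"
    using x by (auto simp: simplex_def)
  show ?thesis
  proof (cases "x v = 1")
    case True
    then have "x i = 0" if "i \<in> {..<n} - {v}" for i
      using simplex_sum_remove[OF x v] sum_nonneg_eq_0_iff[of "{..<n} - {v}" x] nonneg that True
      by simp
    then have "lagr_at E x = lagr_at E ((\<lambda>i. 0 * x i)(v := 1))"
      using True by (intro lagr_at_cong[OF G]) auto
    then show ?thesis
      using lam True lagr_at_rescaled[OF G, of 0 x v 1] by simp
  next
    case False
    with x v have "x v < 1"
      by (auto simp: simplex_def)
    then have "3 * lagrangian n E \<le> lagr_at (link E v) x"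
      using three_lagrangian_le_link[OF G opt v pos] by blast
    moreover have "2 * lagr_at (link E v) x \<le> (1 - x v) ^ 2"
      using lagr_at_pairs_le_square[OF _ nonneg] link_edge[OF G] simplex_sum_remove[OF x v]
      by simp
    ultimately show ?thesis
      by simp
  qed
qed

lemma lagrangian_complete3_ge:
  assumes "m \<ge> 1"
  shows "(real m - 1) * (real m - 2) / (6 * real m ^ 2) \<le> lagrangian m (complete3 m)"
proof -
  define z where "z i = 1 / real m" for i :: nat
  have "z \<in> simplex m"
    using assms by (simp add: simplex_def z_def)
  moreover have G: "is_3graph m (complete3 m)"
    by (simp add: is_3graph_def complete3_def)
  moreover have "6 * real (card (complete3 m)) = real m * (real m - 1) * (real m - 2)"
  proof -
    have "card (complete3 m) = m choose 3"
      unfolding complete3_def using n_subsets[of "{0..<m}" 3] by simp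
    then show ?thesis
      using gbinomial_mult_fact[of 3 "real m"]
      by (simp add: binomial_gbinomial fact_numeral eval_nat_numeral)
  qed
  then have "lagr_at (complete3 m) z = (real m - 1) * (real m - 2) / (6 * real m ^ 2)"
    using assms unfolding lagr_at_def z_def
    by (simp add: complete3_def field_simps power3_eq_cube power2_eq_square)
  ultimately show ?thesis
    using lagr_at_le_lagrangian by metis
qed

theorem claim3p1:
  fixes k n :: nat and E :: "nat set set" and x :: "nat \<Rightarrow> real"
  assumes "k \<ge> 1"
    and "is_3graph n E"
    and "lagrangian n E > lagrangian (k + 1) (complete3 (k + 1))"
    and "optimal_weight n E x"
  shows "\<forall>v<n. x v < 1 - sqrt (real k * (real k - 1)) / (real k + 1)"
proof (intro allI impI)
  fix v assume v: "v < n"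
  have x: "0 \<le> x v" "x v \<le> 1"
    using assms(4) v by (auto simp: optimal_weight_def simplex_def)
  have "real k * (real k - 1) / (6 * (real k + 1) ^ 2) < lagrangian n E"
    using lagrangian_complete3_ge[of "k + 1"] assms(3) by (simp add: algebra_simps)
  then have "real k * (real k - 1) / (real k + 1) ^ 2 < 6 * lagrangian n E"
    by (simp add: field_simps)
  moreover have "6 * lagrangian n E \<le> (1 - x v) ^ 2" if "x v \<noteq> 0"
    using six_lagrangian_le_square[OF assms(2,4) v] x that by simp
  moreover have "real k * (real k - 1) / (real k + 1) ^ 2 < 1"
    by (simp add: divide_less_eq power2_eq_square algebra_simps add_pos_nonneg)
  ultimately have "real k * (real k - 1) / (real k + 1) ^ 2 < (1 - x v) ^ 2"
    by (cases "x v = 0") auto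
  then have "real k * (real k - 1) < ((1 - x v) * (real k + 1)) ^ 2"
    by (simp add: divide_less_eq power_mult_distrib)
  then have "sqrt (real k * (real k - 1)) < (1 - x v) * (real k + 1)"
    using x by (intro real_less_lsqrt) simp_all
  then show "x v < 1 - sqrt (real k * (real k - 1)) / (real k + 1)"
    by (simp add: field_simps)
qed

end
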